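(* Let $p \in \mathbb{R}^3$ and let $x_i \sim \mathcal{N}(\mu_i, \sigma_i^2 I_3)$ be a normal random vector in $\mathbb{R}^3$ with $\mu_i \neq p$ and $\sigma_i > 0$, and let $\mathrm{d}(p,x_i) = \left\langle x_i - p, \frac{\mu_i - p}{\|\mu_i - p\|_2}\right\rangle$. Fix $\varepsilon \in (0,1)$ and a cutoff distance $d_s > 0$. For $\delta \in [0,\infty)$ let $C_\delta = \left(-\infty, \frac{d_s}{1+\delta}\right)$, and define \[ \mathcal{A}_\varepsilon(\mathrm{d}(p,x_i)) = \sup\left\{ \delta \geq 0 \;\middle|\; \mathrm{AV@R}_\varepsilon(\mathrm{d}(p,x_i)) \in C_\delta \right\} \in [0,\infty]. \] Let $\mu = \|\mu_i - p\|_2$, $\iota_\varepsilon = \mathrm{erf}^{-1}(2\varepsilon - 1)$ and $\kappa_\varepsilon = \left(\sqrt{2\pi}\,\varepsilon \exp(\iota_\varepsilon^2)\right)^{-1}$. Then \[ \mathcal{A}_\varepsilon(\mathrm{d}(p,x_i)) = \begin{cases} 0, & \text{if } \frac{\mu - d_s}{\sigma_i} \geq \kappa_\varepsilon,\\[2pt] \dfrac{d_s}{\mu - \kappa_\varepsilon \sigma_i} - 1, & \text{if } \kappa_\varepsilon \in \left(\frac{\mu - d_s}{\sigma_i}, \frac{\mu}{\sigma_i}\right),\\[2pt] \infty, & \text{if } \frac{\mu}{\sigma_i} \leq \kappa_\varepsilon. \end{cases} \]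
   Context: For a continuous real random variable $y$ and $\varepsilon\in(0,1)$: $\mathrm{V@R}_\varepsilon(y) := \inf\{z \mid \mathbb{P}\{y<z\} > \varepsilon\}$ and $\mathrm{AV@R}_\varepsilon(y) := \mathbb{E}[y \mid y < \mathrm{V@R}_\varepsilon(y)]$. $\mathrm{erf}(x) = \frac{2}{\sqrt{\pi}}\int_0^x e^{-t^2}dt$ with inverse $\mathrm{erf}^{-1}:(-1,1)\to\mathbb{R}$. The supremum in the definition of $\mathcal{A}_\varepsilon$ is taken in $[0,\infty]$, with the convention that the supremum of the empty set is $0$. *)

theory Defs
  imports "HOL-Probability.Probability"
begin

definition erf :: "real \<Rightarrow> real" where
  "erf x = 2 / sqrt pi * (LBINT t=0..x. exp (- t\<^sup>2))"

definition erf_inv :: "real \<Rightarrow> real" where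
  "erf_inv y = (THE x. erf x = y)"

definition VaR :: "'a measure \<Rightarrow> ('a \<Rightarrow> real) \<Rightarrow> real \<Rightarrow> real" where
  "VaR M Y eps = Inf {z. measure M {w \<in> space M. Y w < z} > eps}"

definition AVaR :: "'a measure \<Rightarrow> ('a \<Rightarrow> real) \<Rightarrow> real \<Rightarrow> real" where
  "AVaR M Y eps =
     (let A = {w \<in> space M. Y w < VaR M Y eps}
      in (\<integral>w. Y w * indicator A w \<partial>M) / measure M A)"

definition C_set :: "real \<Rightarrow> real \<Rightarrow> real set" where
  "C_set ds \<delta> = {..< ds / (1 + \<delta>)}"

text \<open>Supremum taken in [0,\<infinity>] (ennreal), so Sup of the empty set is 0.\<close>
definition risk_A :: "'a measure \<Rightarrow> ('a \<Rightarrow> real) \<Rightarrow> real \<Rightarrow> real \<Rightarrow> ennreal" where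
  "risk_A M Y eps ds = (SUP \<delta> \<in> {\<delta>::real. \<delta> \<ge> 0 \<and> AVaR M Y eps \<in> C_set ds \<delta>}. ennreal \<delta>)"

definition dist_proj :: "real^3 \<Rightarrow> real^3 \<Rightarrow> real^3 \<Rightarrow> real" where
  "dist_proj p \<mu> x = inner (x - p) ((1 / norm (\<mu> - p)) *\<^sub>R (\<mu> - p))"

end

theory Submission
  imports Defs "HOL-Real_Asymp.Real_Asymp"
begin

(* The signed distance is the projection of x_i - p onto the unit vector
   u = (mu_i - p) / ||mu_i - p||. The coordinates of x_i are independent N(mu_ij, sigma^2),
   so the projection is N(mu, sigma^2) with mu = ||mu_i - p||, whose distribution function is
   Phi(z) = (1 + erf ((z - mu) / (sigma sqrt 2))) / 2. Hence V@R_eps = mu + sigma sqrt 2 iota_eps,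
   and since x phi(x) = mu phi(x) - sigma^2 phi'(x) for the density phi, the lower tail mean is
   AV@R_eps = mu - sigma^2 phi(V@R_eps) / eps = mu - kappa_eps sigma. Finally AV@R_eps lies in
   C_delta iff AV@R_eps (1 + delta) < d_s, which holds for no delta >= 0 if AV@R_eps >= d_s,
   for all of them if AV@R_eps <= 0, and exactly for delta < d_s / AV@R_eps - 1 otherwise. *)

lemma DERIV_erf: "(erf has_real_derivative 2 / sqrt pi * exp (- x\<^sup>2)) (at x)"
proof -
  let ?a = "- \<bar>x\<bar> - 1" and ?b = "\<bar>x\<bar> + 1"
  have "((\<lambda>u. LBINT t=ereal 0..u. exp (- t\<^sup>2)) has_vector_derivative exp (- x\<^sup>2)) (at x within {?a..?b})"
    by (rule interval_integral_FTC2) (auto intro!: continuous_intros)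
  then have "((\<lambda>u. LBINT t=ereal 0..u. exp (- t\<^sup>2)) has_real_derivative exp (- x\<^sup>2)) (at x)"
    by (subst (asm) at_within_Icc_at) (auto simp: has_real_derivative_iff_has_vector_derivative)
  from DERIV_cmult[OF this, of "2 / sqrt pi"] show ?thesis
    unfolding erf_def[abs_def] zero_ereal_def by simp
qed

lemmas DERIV_erf_chain [derivative_intros] = DERIV_chain2[OF DERIV_erf]

lemma isCont_erf: "isCont erf x"
  by (rule DERIV_isCont[OF DERIV_erf])

lemma erf_0 [simp]: "erf 0 = 0"
  by (simp add: erf_def zero_ereal_def)

lemma erf_minus: "erf (- x) = - erf x"
proof -
  have "((\<lambda>x. erf x + erf (- x)) has_real_derivative 0) (at y)" for y
    by (auto intro!: derivative_eq_intros)
  from DERIV_isconst_all[OF allI[OF this], of x 0] show ?thesis by simp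
qed

lemma strict_mono_erf: "strict_mono erf"
  by (rule strict_monoI, rule DERIV_pos_imp_increasing) (auto intro!: DERIV_erf)

definition normal_cdf :: "real \<Rightarrow> real \<Rightarrow> real \<Rightarrow> real" where
  "normal_cdf \<mu> \<sigma> z = (1 + erf ((z - \<mu>) / (\<sigma> * sqrt 2))) / 2"

lemma DERIV_normal_cdf:
  assumes "\<sigma> > 0"
  shows "(normal_cdf \<mu> \<sigma> has_real_derivative normal_density \<mu> \<sigma> x) (at x)"
proof -
  have "(normal_cdf \<mu> \<sigma> has_real_derivative
      1 / 2 * (2 / sqrt pi * exp (- ((x - \<mu>) / (\<sigma> * sqrt 2))\<^sup>2) * (1 / (\<sigma> * sqrt 2)))) (at x)"
    unfolding normal_cdf_def[abs_def] using assms by (auto intro!: derivative_eq_intros)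
  moreover have "1 / 2 * (2 / sqrt pi * exp (- ((x - \<mu>) / (\<sigma> * sqrt 2))\<^sup>2) * (1 / (\<sigma> * sqrt 2)))
      = normal_density \<mu> \<sigma> x"
    using assms unfolding normal_density_def
    by (simp add: power_divide power_mult_distrib real_sqrt_mult field_simps)
  ultimately show ?thesis by simp
qed

lemma isCont_normal_cdf: "\<sigma> > 0 \<Longrightarrow> isCont (normal_cdf \<mu> \<sigma>) x"
  using DERIV_isCont[OF DERIV_normal_cdf] .

lemma normal_cdf_less_iff:
  assumes "\<sigma> > 0"
  shows "normal_cdf \<mu> \<sigma> y < normal_cdf \<mu> \<sigma> z \<longleftrightarrow> y < z"
  using assms unfolding normal_cdf_def
  by (simp add: strict_mono_less[OF strict_mono_erf] divide_less_cancel mult_less_0_iff)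

lemma normal_cdf_reflect: "normal_cdf \<mu> \<sigma> (2 * \<mu> - z) = 1 - normal_cdf \<mu> \<sigma> z"
proof -
  have "(2 * \<mu> - z - \<mu>) / (\<sigma> * sqrt 2) = - ((z - \<mu>) / (\<sigma> * sqrt 2))"
    by (simp add: minus_divide_left)
  then show ?thesis unfolding normal_cdf_def by (simp add: erf_minus field_simps)
qed

lemma measure_normal_density_Ioc:
  assumes "\<sigma> > 0" "a \<le> b"
  shows "measure (density lborel (\<lambda>x. ennreal (normal_density \<mu> \<sigma> x))) {a<..b}
    = normal_cdf \<mu> \<sigma> b - normal_cdf \<mu> \<sigma> a"
proof -
  have "measure (density lborel (\<lambda>x. ennreal (normal_density \<mu> \<sigma> x))) {a<..b}
      = (\<integral>x. indicator {a<..b} x \<partial>density lborel (\<lambda>x. ennreal (normal_density \<mu> \<sigma> x)))"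
    by simp
  also have "\<dots> = (\<integral>x. normal_density \<mu> \<sigma> x *\<^sub>R indicator {a<..b} x \<partial>lborel)"
    by (rule integral_density) auto
  also have "\<dots> = (LBINT x=a..b. normal_density \<mu> \<sigma> x)"
    using assms by (simp add: interval_integral_Ioc set_lebesgue_integral_def mult.commute)
  also have "\<dots> = normal_cdf \<mu> \<sigma> b - normal_cdf \<mu> \<sigma> a"
  proof (rule interval_integral_FTC_finite)
    show "continuous_on {min a b..max a b} (normal_density \<mu> \<sigma>)"
      using assms by (auto simp: normal_density_def intro!: continuous_intros)
    show "(normal_cdf \<mu> \<sigma> has_vector_derivative normal_density \<mu> \<sigma> x) (at x within {min a b..max a b})"
      for x using DERIV_subset[OF DERIV_normal_cdf[OF assms(1)]]
      by (simp add: has_real_derivative_iff_has_vector_derivative)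
  qed
  finally show ?thesis .
qed

lemma cdf_normal_density:
  assumes "\<sigma> > 0"
  shows "cdf (density lborel (\<lambda>x. ennreal (normal_density \<mu> \<sigma> x))) = normal_cdf \<mu> \<sigma>"
proof
  define N where "N = density lborel (\<lambda>x. ennreal (normal_density \<mu> \<sigma> x))"
  interpret N: real_distribution N
    unfolding N_def real_distribution_def real_distribution_axioms_def
    using prob_space_normal_density assms by auto
  define c where "c = cdf N 0 - normal_cdf \<mu> \<sigma> 0"
  have cdf_eq: "cdf N z = normal_cdf \<mu> \<sigma> z + c" for z
  proof (cases z "0::real" rule: linorder_cases)
    case less
    then show ?thesis using N.cdf_diff_eq[OF less] measure_normal_density_Ioc[OF assms, of z 0]
      unfolding N_def c_def by simp
  next
    case greater
    then show ?thesis using N.cdf_diff_eq[OF greater] measure_normal_density_Ioc[OF assms, of 0 z]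
      unfolding N_def c_def by simp
  qed (simp add: c_def)
  \<comment> \<open>\<open>c = 0\<close>: compare the limits of \<open>cdf N\<close> at \<open>-\<infinity>\<close> and, via \<open>normal_cdf_reflect\<close>, at \<open>\<infinity>\<close>.\<close>
  have "((\<lambda>z. normal_cdf \<mu> \<sigma> z) \<longlongrightarrow> 0 - c) at_bot"
    using tendsto_diff[OF N.cdf_lim_at_bot tendsto_const[of c]] by (simp add: cdf_eq)
  then have lim_c: "((\<lambda>z. 1 - normal_cdf \<mu> \<sigma> z + c) \<longlongrightarrow> 1 - (0 - c) + c) at_bot"
    by (intro tendsto_intros)
  have lim_1: "((\<lambda>z. 1 - normal_cdf \<mu> \<sigma> z + c) \<longlongrightarrow> 1) at_bot"
  proof -
    have "filterlim (\<lambda>z::real. 2 * \<mu> - z) at_top at_bot" by real_asymp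
    from filterlim_compose[OF N.cdf_lim_at_top_prob this]
    show ?thesis by (simp add: cdf_eq normal_cdf_reflect)
  qed
  have "1 - (0 - c) + c = 1" by (rule tendsto_unique[OF _ lim_c lim_1]) simp
  then have "c = 0" by simp
  then show "cdf N z = normal_cdf \<mu> \<sigma> z" for z by (simp add: cdf_eq)
qed

lemma
  shows tendsto_erf_at_top: "(erf \<longlongrightarrow> 1) at_top"
    and tendsto_erf_at_bot: "(erf \<longlongrightarrow> -1) at_bot"
proof -
  define N where "N = density lborel (\<lambda>x. ennreal (normal_density 0 (1 / sqrt 2) x))"
  interpret N: real_distribution N
    unfolding N_def real_distribution_def real_distribution_axioms_def
    using prob_space_normal_density by auto
  have erf_eq: "erf = (\<lambda>z. 2 * cdf N z - 1)"
    by (simp add: N_def cdf_normal_density normal_cdf_def fun_eq_iff field_simps)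
  have "((\<lambda>z. 2 * cdf N z - 1) \<longlongrightarrow> 2 * 1 - 1) at_top"
    by (intro tendsto_intros N.cdf_lim_at_top_prob)
  then show "(erf \<longlongrightarrow> 1) at_top" by (simp add: erf_eq)
  have "((\<lambda>z. 2 * cdf N z - 1) \<longlongrightarrow> 2 * 0 - 1) at_bot"
    by (intro tendsto_intros N.cdf_lim_at_bot)
  then show "(erf \<longlongrightarrow> -1) at_bot" by (simp add: erf_eq)
qed

lemma erf_erf_inv:
  assumes "-1 < y" "y < 1"
  shows "erf (erf_inv y) = y"
proof -
  obtain a where a: "erf a < y"
    using order_tendstoD(2)[OF tendsto_erf_at_bot assms(1)] by (auto simp: eventually_at_bot_linorder)
  obtain b where b: "y < erf b"
    using order_tendstoD(1)[OF tendsto_erf_at_top assms(2)] by (auto simp: eventually_at_top_linorder)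
  have "a \<le> b" using a b strict_mono_less_eq[OF strict_mono_erf, of b a] by linarith
  then obtain x where x: "erf x = y"
    using IVT'[of erf a y b] a b isCont_erf by (auto intro: continuous_at_imp_continuous_on)
  have "inj erf" using strict_mono_on_imp_inj_on[OF strict_mono_erf] by simp
  have "erf_inv y = x"
    unfolding erf_inv_def by (rule the_equality[where P = "\<lambda>x. erf x = y", OF x]) (metis \<open>inj erf\<close> injD x)
  with x show ?thesis by simp
qed

lemma DERIV_normal_density:
  assumes "\<sigma> > 0"
  shows "(normal_density \<mu> \<sigma> has_real_derivative - (x - \<mu>) / \<sigma>\<^sup>2 * normal_density \<mu> \<sigma> x) (at x)"
proof -
  have "((\<lambda>x. - (x - \<mu>)\<^sup>2 / (2 * \<sigma>\<^sup>2)) has_real_derivative - (x - \<mu>) / \<sigma>\<^sup>2) (at x)"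
    using assms by (auto intro!: derivative_eq_intros simp: field_simps power2_eq_square)
  from DERIV_cmult[OF DERIV_fun_exp[OF this], of "1 / sqrt (2 * pi * \<sigma>\<^sup>2)"] show ?thesis
    unfolding normal_density_def[abs_def] by (simp add: mult_ac)
qed

lemma integral_normal_density_lower_tail:
  assumes "\<sigma> > 0"
  shows "(\<integral>x. normal_density \<mu> \<sigma> x * (x * indicator {..<v} x) \<partial>lborel)
    = \<mu> * normal_cdf \<mu> \<sigma> v - \<sigma>\<^sup>2 * normal_density \<mu> \<sigma> v"
proof -
  define F where "F x = \<mu> * normal_cdf \<mu> \<sigma> x - \<sigma>\<^sup>2 * normal_density \<mu> \<sigma> x" for x
  \<comment> \<open>\<open>F\<close> is a primitive of \<open>x \<phi>(x)\<close> because \<open>x \<phi>(x) = \<mu> \<phi>(x) - \<sigma>\<^sup>2 \<phi>'(x)\<close>.\<close>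
  have F': "(F has_real_derivative x * normal_density \<mu> \<sigma> x) (at x)" for x
  proof -
    have "(F has_real_derivative
        \<mu> * normal_density \<mu> \<sigma> x - \<sigma>\<^sup>2 * (- (x - \<mu>) / \<sigma>\<^sup>2 * normal_density \<mu> \<sigma> x)) (at x)"
      unfolding F_def[abs_def] using assms
      by (intro DERIV_diff DERIV_cmult DERIV_normal_cdf DERIV_normal_density)
    then show ?thesis using assms by (simp add: field_simps)
  qed
  have "(LBINT x=-\<infinity>..ereal v. x * normal_density \<mu> \<sigma> x) = F v - 0"
  proof (rule interval_integral_FTC_integrable)
    show "(F has_vector_derivative x * normal_density \<mu> \<sigma> x) (at x)" for x
      using F' by (simp add: has_real_derivative_iff_has_vector_derivative)
    show "isCont (\<lambda>x. x * normal_density \<mu> \<sigma> x) x" for x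
      unfolding normal_density_def using assms by (auto intro!: continuous_intros)
    show "set_integrable lborel (einterval (- \<infinity>) (ereal v)) (\<lambda>x. x * normal_density \<mu> \<sigma> x)"
      unfolding set_integrable_def using integrable_normal_moment_nz_1[OF assms]
      by (intro integrable_mult_indicator) (auto simp: mult.commute)
    interpret N: real_distribution "density lborel (\<lambda>x. ennreal (normal_density \<mu> \<sigma> x))"
      using prob_space_normal_density assms by (auto simp: real_distribution_def real_distribution_axioms_def)
    have "(normal_density \<mu> \<sigma> \<longlongrightarrow> 0) at_bot"
      unfolding normal_density_def[abs_def] using assms by real_asymp
    with N.cdf_lim_at_bot have "(F \<longlongrightarrow> \<mu> * 0 - \<sigma>\<^sup>2 * 0) at_bot"
      unfolding F_def cdf_normal_density[OF assms] by (intro tendsto_intros)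
    then show "((F \<circ> real_of_ereal) \<longlongrightarrow> 0) (at_right (- \<infinity>))"
      by (simp add: ereal_tendsto_simps1)
    have "(F \<longlongrightarrow> F v) (at_left v)"
      using DERIV_isCont[OF F'] by (simp add: isCont_def filterlim_at_split)
    then show "((F \<circ> real_of_ereal) \<longlongrightarrow> F v) (at_left (ereal v))"
      by (simp add: ereal_tendsto_simps1)
  qed simp
  moreover have "(LBINT x=-\<infinity>..ereal v. x * normal_density \<mu> \<sigma> x)
      = (\<integral>x. normal_density \<mu> \<sigma> x * (x * indicator {..<v} x) \<partial>lborel)"
    unfolding interval_lebesgue_integral_def set_lebesgue_integral_def
    by (auto intro!: Bochner_Integration.integral_cong simp: indicator_def)
  ultimately show ?thesis by (simp add: F_def)
qed

lemma normal_cdf_quantile: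
  assumes "\<sigma> > 0" "0 < eps" "eps < 1"
  shows "normal_cdf \<mu> \<sigma> (\<mu> + \<sigma> * sqrt 2 * erf_inv (2 * eps - 1)) = eps"
  using assms erf_erf_inv[of "2 * eps - 1"] by (simp add: normal_cdf_def)

context prob_space
begin

lemma prob_less_normal:
  assumes "distributed M lborel Y (\<lambda>t. ennreal (normal_density \<mu> \<sigma> t))" "\<sigma> > 0"
  shows "prob {w \<in> space M. Y w < z} = normal_cdf \<mu> \<sigma> z"
proof -
  let ?N = "density lborel (\<lambda>x. ennreal (normal_density \<mu> \<sigma> x))"
  interpret N: real_distribution ?N
    using prob_space_normal_density assms(2) by (auto simp: real_distribution_def real_distribution_axioms_def)
  have [measurable]: "Y \<in> borel_measurable M"
    using distributed_measurable[OF assms(1)] by simp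
  have "prob {w \<in> space M. Y w < z} = measure (distr M lborel Y) {..<z}"
    by (subst measure_distr) (auto intro!: arg_cong[where f = prob])
  also have "\<dots> = measure ?N {..<z}"
    by (simp add: distributed_distr_eq_density[OF assms(1)])
  also have "\<dots> = normal_cdf \<mu> \<sigma> z"
  proof (rule tendsto_unique[OF _ N.cdf_at_left])
    show "(cdf ?N \<longlongrightarrow> normal_cdf \<mu> \<sigma> z) (at_left z)"
      using isCont_normal_cdf[OF assms(2)]
      by (simp add: cdf_normal_density[OF assms(2)] isCont_def filterlim_at_split)
  qed simp
  finally show ?thesis .
qed

lemma VaR_normal:
  assumes Y: "distributed M lborel Y (\<lambda>t. ennreal (normal_density \<mu> \<sigma> t))"
    and "\<sigma> > 0" "0 < eps" "eps < 1"
  shows "VaR M Y eps = \<mu> + \<sigma> * sqrt 2 * erf_inv (2 * eps - 1)"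
proof -
  let ?v = "\<mu> + \<sigma> * sqrt 2 * erf_inv (2 * eps - 1)"
  have "{z. prob {w \<in> space M. Y w < z} > eps} = {?v<..}"
    using prob_less_normal[OF Y \<open>\<sigma> > 0\<close>] normal_cdf_less_iff[OF \<open>\<sigma> > 0\<close>, of \<mu> ?v]
      normal_cdf_quantile[OF assms(2-4), of \<mu>] by auto
  then show ?thesis by (simp add: VaR_def)
qed

lemma AVaR_normal:
  assumes Y: "distributed M lborel Y (\<lambda>t. ennreal (normal_density \<mu> \<sigma> t))"
    and "\<sigma> > 0" "0 < eps" "eps < 1"
  shows "AVaR M Y eps = \<mu> - \<sigma> / (sqrt (2 * pi) * eps * exp ((erf_inv (2 * eps - 1))\<^sup>2))"
proof -
  define \<iota> where "\<iota> = erf_inv (2 * eps - 1)"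
  define v where "v = \<mu> + \<sigma> * sqrt 2 * \<iota>"
  define A where "A = {w \<in> space M. Y w < v}"
  have [measurable]: "Y \<in> borel_measurable M"
    using distributed_measurable[OF Y] by simp
  have prob_A: "prob A = eps"
    using prob_less_normal[OF Y \<open>\<sigma> > 0\<close>] normal_cdf_quantile[OF assms(2-4)]
    by (simp add: A_def v_def \<iota>_def)
  have "(\<integral>w. Y w * indicator A w \<partial>M) = (\<integral>w. (\<lambda>x. x * indicator {..<v} x) (Y w) \<partial>M)"
    by (rule Bochner_Integration.integral_cong) (auto simp: A_def indicator_def)
  also have "\<dots> = (\<integral>x. normal_density \<mu> \<sigma> x * (x * indicator {..<v} x) \<partial>lborel)"
    by (rule distributed_integral[OF Y, symmetric]) auto
  also have "\<dots> = \<mu> * eps - \<sigma>\<^sup>2 * normal_density \<mu> \<sigma> v"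
    using integral_normal_density_lower_tail[OF \<open>\<sigma> > 0\<close>] normal_cdf_quantile[OF assms(2-4)]
    by (simp add: v_def \<iota>_def)
  finally have integral_A: "(\<integral>w. Y w * indicator A w \<partial>M) = \<mu> * eps - \<sigma>\<^sup>2 * normal_density \<mu> \<sigma> v" .
  have density_v: "normal_density \<mu> \<sigma> v = 1 / (\<sigma> * sqrt (2 * pi) * exp (\<iota>\<^sup>2))"
    using \<open>\<sigma> > 0\<close>
    by (simp add: normal_density_def v_def power_mult_distrib real_sqrt_mult exp_minus field_simps)
  have VaR_v: "VaR M Y eps = v" using VaR_normal[OF assms] by (simp add: v_def \<iota>_def)
  show ?thesis using \<open>\<sigma> > 0\<close> \<open>0 < eps\<close>
    unfolding AVaR_def Let_def VaR_v A_def[symmetric] integral_A prob_A density_v \<iota>_def[symmetric]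
    by (simp add: field_simps power2_eq_square)
qed

lemma distributed_inner_normal:
  fixes X :: "'a \<Rightarrow> real^'n" and \<mu> c u :: "real^'n"
  assumes indep: "indep_vars (\<lambda>_. borel) (\<lambda>j w. X w $ j) UNIV"
    and normal: "\<And>j. distributed M lborel (\<lambda>w. X w $ j) (\<lambda>t. ennreal (normal_density (\<mu> $ j) \<sigma> t))"
    and "\<sigma> > 0" and "norm u = 1"
  shows "distributed M lborel (\<lambda>w. inner (X w - c) u)
    (\<lambda>t. ennreal (normal_density (inner (\<mu> - c) u) \<sigma> t))"
proof -
  \<comment> \<open>Only the coordinates with \<open>u $ j \<noteq> 0\<close> are non-degenerate normal summands.\<close>
  define I where "I = {j. u $ j \<noteq> 0}"
  have "I \<noteq> {}" using \<open>norm u = 1\<close> by (auto simp: I_def) (metis norm_zero vec_eq_iff zero_index zero_neq_one)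
  have sum_I: "(\<Sum>j\<in>UNIV. f j) = (\<Sum>j\<in>I. f j)" if "\<And>j. u $ j = 0 \<Longrightarrow> f j = 0" for f :: "'n \<Rightarrow> real"
    using that by (intro sum.mono_neutral_right) (auto simp: I_def)
  have inner_eq: "inner (x - c) u = (\<Sum>j\<in>I. - c $ j * u $ j + u $ j * x $ j)" for x
    by (subst sum_I[symmetric]) (auto simp: inner_vec_def algebra_simps sum_subtractf)
  have "distributed M lborel (\<lambda>w. \<Sum>j\<in>I. - c $ j * u $ j + u $ j * X w $ j)
      (normal_density (\<Sum>j\<in>I. - c $ j * u $ j + u $ j * \<mu> $ j) (sqrt (\<Sum>j\<in>I. (\<bar>u $ j\<bar> * \<sigma>)\<^sup>2)))"
  proof (rule sum_indep_normal)
    show "indep_vars (\<lambda>_. borel) (\<lambda>j w. - c $ j * u $ j + u $ j * X w $ j) I"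
      using indep_vars_compose2[OF indep_vars_subset[OF indep], of I "\<lambda>j x. - c $ j * u $ j + u $ j * x"]
      by simp
    show "distributed M lborel (\<lambda>w. - c $ j * u $ j + u $ j * X w $ j)
        (normal_density (- c $ j * u $ j + u $ j * \<mu> $ j) (\<bar>u $ j\<bar> * \<sigma>))" if "j \<in> I" for j
      using normal_density_affine[OF normal \<open>\<sigma> > 0\<close>, of "u $ j" "- c $ j * u $ j" j] that
      by (simp add: I_def)
  qed (use \<open>I \<noteq> {}\<close> \<open>\<sigma> > 0\<close> in \<open>auto simp: I_def\<close>)
  moreover have "(\<Sum>j\<in>I. (\<bar>u $ j\<bar> * \<sigma>)\<^sup>2) = \<sigma>\<^sup>2 * inner u u"
    by (subst sum_I[symmetric]) (auto simp: inner_vec_def sum_distrib_left power_mult_distrib power2_eq_square mult_ac)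
  ultimately show ?thesis
    using \<open>norm u = 1\<close> \<open>\<sigma> > 0\<close> by (simp add: inner_eq power2_norm_eq_inner[symmetric])
qed

end

lemma risk_A_eq:
  assumes "ds > 0" and "AVaR M Y eps = a"
  shows "risk_A M Y eps ds = (if ds \<le> a then 0 else if a \<le> 0 then \<infinity> else ennreal (ds / a - 1))"
proof -
  have admissible: "{\<delta>. 0 \<le> \<delta> \<and> AVaR M Y eps \<in> C_set ds \<delta>} = {\<delta>. 0 \<le> \<delta> \<and> a * (1 + \<delta>) < ds}"
    using assms(2) by (auto simp: C_set_def pos_less_divide_eq)
  consider "ds \<le> a" | "a \<le> 0" | "0 < a" "a < ds" by linarith
  then show ?thesis
  proof cases
    case 1
    have "a \<le> a * (1 + \<delta>)" if "0 \<le> \<delta>" for \<delta>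
      using 1 assms(1) that by (simp add: algebra_simps)
    with 1 have "{\<delta>. 0 \<le> \<delta> \<and> a * (1 + \<delta>) < ds} = {}" by force
    with 1 show ?thesis by (simp add: risk_A_def admissible bot_ennreal del: Collect_empty_eq)
  next
    case 2
    have "a * (1 + \<delta>) \<le> 0" if "0 \<le> \<delta>" for \<delta>
      using 2 that by (simp add: mult_nonpos_nonneg)
    with assms(1) have "{\<delta>. 0 \<le> \<delta> \<and> a * (1 + \<delta>) < ds} = {0..}" by fastforce
    moreover have "(SUP \<delta> \<in> {0::real..}. ennreal \<delta>) = \<top>"
      by (rule ennreal_SUP_eq_top) (auto intro!: bexI[of _ "real _"])
    ultimately show ?thesis using 2 assms(1) by (simp add: risk_A_def admissible)
  next
    case 3
    define T where "T = ds / a - 1"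
    have "T > 0" using 3 by (simp add: T_def)
    have "{\<delta>. 0 \<le> \<delta> \<and> a * (1 + \<delta>) < ds} = {0..<T}"
      using 3 by (auto simp: T_def field_simps)
    moreover have "ennreal (Sup {0..<T}) = (SUP \<delta> \<in> {0..<T}. ennreal \<delta>)"
      using \<open>T > 0\<close> by (intro continuous_at_Sup_mono) (auto simp: mono_def ennreal_leI continuous_within)
    ultimately show ?thesis using 3 \<open>T > 0\<close> by (simp add: risk_A_def admissible T_def)
  qed
qed

theorem corollary1:
  fixes M :: "'a measure" and X :: "'a \<Rightarrow> real^3"
    and p \<mu>i :: "real^3" and \<sigma> eps ds :: real
  assumes "prob_space M"
    and "prob_space.indep_vars M (\<lambda>_. borel) (\<lambda>j w. X w $ j) UNIV"
    and "\<And>j. distributed M lborel (\<lambda>w. X w $ j) (\<lambda>t. ennreal (normal_density (\<mu>i $ j) \<sigma> t))"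
    and "\<mu>i \<noteq> p" and "\<sigma> > 0"
    and "0 < eps" and "eps < 1" and "ds > 0"
  shows
    "let m = norm (\<mu>i - p);
         \<iota> = erf_inv (2 * eps - 1);
         \<kappa> = 1 / (sqrt (2 * pi) * eps * exp (\<iota>\<^sup>2));
         A = risk_A M (\<lambda>w. dist_proj p \<mu>i (X w)) eps ds
     in ((m - ds) / \<sigma> \<ge> \<kappa> \<longrightarrow> A = 0)
      \<and> ((m - ds) / \<sigma> < \<kappa> \<and> \<kappa> < m / \<sigma> \<longrightarrow> A = ennreal (ds / (m - \<kappa> * \<sigma>) - 1))
      \<and> (m / \<sigma> \<le> \<kappa> \<longrightarrow> A = \<infinity>)"
proof -
  interpret prob_space M by fact
  define m where "m = norm (\<mu>i - p)"
  define \<kappa> where "\<kappa> = 1 / (sqrt (2 * pi) * eps * exp ((erf_inv (2 * eps - 1))\<^sup>2))"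
  define u where "u = (1 / m) *\<^sub>R (\<mu>i - p)"
  have "m > 0" using \<open>\<mu>i \<noteq> p\<close> by (simp add: m_def)
  then have "norm u = 1" and inner_u: "inner (\<mu>i - p) u = m"
    by (simp_all add: u_def m_def power2_norm_eq_inner[symmetric] power2_eq_square)
  have "dist_proj p \<mu>i x = inner (x - p) u" for x
    by (simp add: dist_proj_def u_def m_def)
  then have "distributed M lborel (\<lambda>w. dist_proj p \<mu>i (X w)) (\<lambda>t. ennreal (normal_density m \<sigma> t))"
    using distributed_inner_normal[OF assms(2,3,5) \<open>norm u = 1\<close>, of p] by (simp add: inner_u)
  then have "AVaR M (\<lambda>w. dist_proj p \<mu>i (X w)) eps = m - \<kappa> * \<sigma>"
    by (simp add: AVaR_normal assms(5-7) \<kappa>_def)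
  then have "risk_A M (\<lambda>w. dist_proj p \<mu>i (X w)) eps ds =
      (if ds \<le> m - \<kappa> * \<sigma> then 0 else if m - \<kappa> * \<sigma> \<le> 0 then \<infinity> else ennreal (ds / (m - \<kappa> * \<sigma>) - 1))"
    by (rule risk_A_eq[OF \<open>ds > 0\<close>])
  moreover have "\<kappa> \<le> (m - ds) / \<sigma> \<longleftrightarrow> ds \<le> m - \<kappa> * \<sigma>" "\<kappa> < m / \<sigma> \<longleftrightarrow> \<not> m - \<kappa> * \<sigma> \<le> 0"
    "m / \<sigma> \<le> \<kappa> \<longleftrightarrow> m - \<kappa> * \<sigma> \<le> 0"
    using \<open>\<sigma> > 0\<close> by (auto simp: field_simps)
  ultimately show ?thesis
    unfolding Let_def m_def[symmetric] \<kappa>_def[symmetric] using \<open>ds > 0\<close> by auto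
qed

end
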